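(* For all $n\ge3$, the number of pairwise non-isomorphic graphs among the quotient graphs $Q_R$, $R\in\mathcal C_n^*$, is at least $2^n-2n+1$.
   Context: $S_n$ is the set of permutations of $[n]$ with the weak order (inclusion of inversion sets); a lattice congruence is an equivalence relation compatible with joins and meets. Fences. $]a,b[=\{a+1,\dots,b-1\}$. The fence $f(a,b,L)$, for $1\le a<b\le n$ and $L\subseteq\,]a,b[$, is the set of cover edges joining two permutations that differ by swapping adjacent entries $a,b$, with the values of $L$ left of $a,b$ and those of $]a,b[\setminus L$ to the right. Forcing order: $f(a,b,L)\prec f(c,d,M)$ iff $a\le c<d\le b$, $(a,b)\ne(c,d)$, $M=L\cap\,]c,d[$. Lattice congruences $R$ correspond bijectively to downsets $F_R$ of the forcing order (a cover edge joins equivalent permutations iff it lies in a fence of $F_R$). $R$ is essential if $F_R$ contains no fence $f(a,a+1,\emptyset)$; $\mathcal C_n^*$ is the set of essential congruences. $Q_R$ is the undirected cover graph of $S_n/R$. *)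

theory Defs
  imports Main
begin

text \<open>Permutations of [n] = {1..n} in one-line notation, as lists.\<close>
definition perms :: "nat \<Rightarrow> nat list set" where
  "perms n = {p. distinct p \<and> set p = {1..n}}"

definition invs :: "nat list \<Rightarrow> (nat \<times> nat) set" where
  "invs p = {(a,b). a < b \<and> (\<exists>i j. i < j \<and> j < length p \<and> p ! i = b \<and> p ! j = a)}"

definition weak_le :: "nat list \<Rightarrow> nat list \<Rightarrow> bool" where
  "weak_le p q \<longleftrightarrow> invs p \<subseteq> invs q"

definition wjoin :: "nat \<Rightarrow> nat list \<Rightarrow> nat list \<Rightarrow> nat list" where
  "wjoin n x y = (THE z. z \<in> perms n \<and> weak_le x z \<and> weak_le y z \<and>
      (\<forall>w\<in>perms n. weak_le x w \<and> weak_le y w \<longrightarrow> weak_le z w))"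

definition wmeet :: "nat \<Rightarrow> nat list \<Rightarrow> nat list \<Rightarrow> nat list" where
  "wmeet n x y = (THE z. z \<in> perms n \<and> weak_le z x \<and> weak_le z y \<and>
      (\<forall>w\<in>perms n. weak_le w x \<and> weak_le w y \<longrightarrow> weak_le w z))"

definition lattice_cong :: "nat \<Rightarrow> (nat list \<times> nat list) set \<Rightarrow> bool" where
  "lattice_cong n R \<longleftrightarrow> equiv (perms n) R \<and>
     (\<forall>x\<in>perms n. \<forall>y\<in>perms n. \<forall>z\<in>perms n. (x,y) \<in> R \<longrightarrow>
        (wjoin n x z, wjoin n y z) \<in> R \<and> (wmeet n x z, wmeet n y z) \<in> R)"

definition fence :: "nat \<Rightarrow> nat \<Rightarrow> nat \<Rightarrow> nat set \<Rightarrow> (nat list \<times> nat list) set" where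
  "fence n a b L = {(p,q). p \<in> perms n \<and> q \<in> perms n \<and>
     (\<exists>i. Suc i < length p \<and> p ! i = a \<and> p ! Suc i = b \<and>
          q = p[i := b, Suc i := a] \<and>
          (\<forall>c\<in>L. c \<in> set (take i p)) \<and>
          (\<forall>c\<in>{a<..<b} - L. c \<in> set (drop (Suc (Suc i)) p)))}"

definition valid_fence :: "nat \<Rightarrow> nat \<times> nat \<times> nat set \<Rightarrow> bool" where
  "valid_fence n f \<longleftrightarrow> (case f of (a,b,L) \<Rightarrow> 1 \<le> a \<and> a < b \<and> b \<le> n \<and> L \<subseteq> {a<..<b})"

definition fences_of :: "nat \<Rightarrow> (nat list \<times> nat list) set \<Rightarrow> (nat \<times> nat \<times> nat set) set" where
  "fences_of n R = {f. valid_fence n f \<and> (case f of (a,b,L) \<Rightarrow> fence n a b L \<subseteq> R)}"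

definition ess_congs :: "nat \<Rightarrow> (nat list \<times> nat list) set set" where
  "ess_congs n = {R. lattice_cong n R \<and> (\<forall>a. (a, a+1, {}) \<notin> fences_of n R)}"

text \<open>Undirected graphs as (vertex set, set of 2-element edges).\<close>
type_synonym 'v graph = "'v set \<times> 'v set set"

definition quot_le :: "nat list set \<Rightarrow> nat list set \<Rightarrow> bool" where
  "quot_le X Y \<longleftrightarrow> (\<exists>x\<in>X. \<exists>y\<in>Y. weak_le x y)"

definition quot_cover :: "nat list set set \<Rightarrow> nat list set \<Rightarrow> nat list set \<Rightarrow> bool" where
  "quot_cover V X Y \<longleftrightarrow> X \<in> V \<and> Y \<in> V \<and> quot_le X Y \<and> X \<noteq> Y \<and>
     \<not> (\<exists>Z\<in>V. quot_le X Z \<and> X \<noteq> Z \<and> quot_le Z Y \<and> Z \<noteq> Y)"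

definition QR :: "nat \<Rightarrow> (nat list \<times> nat list) set \<Rightarrow> nat list set graph" where
  "QR n R = (perms n // R,
     {{X,Y} | X Y. quot_cover (perms n // R) X Y})"

definition graph_iso :: "'a graph \<Rightarrow> 'b graph \<Rightarrow> bool" where
  "graph_iso G H \<longleftrightarrow> (\<exists>f. bij_betw f (fst G) (fst H) \<and>
     (\<forall>x\<in>fst G. \<forall>y\<in>fst G. {x,y} \<in> snd G \<longleftrightarrow> {f x, f y} \<in> snd H))"

end

theory Submission
  imports Defs
begin

text \<open>For \<open>2 \<le> d\<close> and a set \<open>P\<close> of fences of length \<open>d\<close>, the fences longer than \<open>d\<close> together
  with \<open>P\<close> form a downset of the forcing order. The corresponding congruence has a direct
  description: \<open>x \<equiv> y\<close> iff \<open>x\<close> and \<open>y\<close> have the same inversions \<open>(a, b)\<close> with \<open>b - a < d\<close>, and at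
  each pair of length \<open>d\<close> where they differ, \<open>x\<close> looks like an edge of a fence in \<open>P\<close>.
  Compatibility with joins comes from the fact that the inversion set of \<open>x \<squnion> z\<close> is the
  transitive closure of \<open>inv x \<union> inv z\<close>, whose pairs inside \<open>[a, b]\<close> only depend on inversions
  inside \<open>[a, b]\<close>; meets reduce to joins by reversing permutations.

  Adding the fences of length \<open>d = n - 1, \<dots>, 2\<close> one at a time yields a strictly increasing chain
  of \<open>1 + (\<Sum>d = 2..<n. (n - d) 2 ^ (d - 1)) = 2 ^ n - 2n + 1\<close> essential congruences. A strictly coarser
  congruence has strictly fewer classes, so the quotient graphs along the chain have pairwise
  different numbers of vertices.\<close>

definition precedes :: "'a list \<Rightarrow> 'a \<Rightarrow> 'a \<Rightarrow> bool" where
  "precedes p u v \<longleftrightarrow> (\<exists>i j. i < j \<and> j < length p \<and> p ! i = u \<and> p ! j = v)"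

lemma invs_eq_precedes: "invs p = {(a, b). a < b \<and> precedes p b a}"
  unfolding invs_def precedes_def by auto

lemma precedes_Nil [simp]: "\<not> precedes [] u v"
  unfolding precedes_def by simp

lemma precedes_Cons: "precedes (x # xs) u v \<longleftrightarrow> (u = x \<and> v \<in> set xs) \<or> precedes xs u v"
proof
  assume "precedes (x # xs) u v"
  then obtain i j where "i < j" "j < length (x # xs)" "(x # xs) ! i = u" "(x # xs) ! j = v"
    unfolding precedes_def by blast
  then show "(u = x \<and> v \<in> set xs) \<or> precedes xs u v"
    unfolding precedes_def by (cases i; cases j) auto
next
  assume "(u = x \<and> v \<in> set xs) \<or> precedes xs u v"
  then show "precedes (x # xs) u v"
  proof
    assume "u = x \<and> v \<in> set xs"
    then obtain j where "j < length xs" "xs ! j = v" "u = x" by (auto simp: in_set_conv_nth)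
    then show ?thesis unfolding precedes_def by (intro exI[of _ 0] exI[of _ "Suc j"]) auto
  next
    assume "precedes xs u v"
    then show ?thesis unfolding precedes_def by (metis Suc_less_eq length_Cons nth_Cons_Suc)
  qed
qed

lemma precedes_append:
  "precedes (xs @ ys) u v \<longleftrightarrow> precedes xs u v \<or> precedes ys u v \<or> (u \<in> set xs \<and> v \<in> set ys)"
  by (induction xs) (auto simp: precedes_Cons)

lemma precedes_in_set: "precedes p u v \<Longrightarrow> u \<in> set p \<and> v \<in> set p"
  by (induction p) (auto simp: precedes_Cons)

lemma precedes_irrefl: "distinct p \<Longrightarrow> \<not> precedes p u u"
  by (induction p) (auto simp: precedes_Cons dest: precedes_in_set)

lemma precedes_asym: "distinct p \<Longrightarrow> precedes p u v \<Longrightarrow> \<not> precedes p v u"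
  by (induction p) (auto simp: precedes_Cons dest: precedes_in_set)

lemma precedes_trans: "distinct p \<Longrightarrow> precedes p u v \<Longrightarrow> precedes p v w \<Longrightarrow> precedes p u w"
  by (induction p) (auto simp: precedes_Cons dest: precedes_in_set)

lemma precedes_total: "u \<in> set p \<Longrightarrow> v \<in> set p \<Longrightarrow> u \<noteq> v \<Longrightarrow> precedes p u v \<or> precedes p v u"
  by (induction p) (auto simp: precedes_Cons)

lemma precedes_rev: "precedes (rev p) u v \<longleftrightarrow> precedes p v u"
  by (induction p) (auto simp: precedes_Cons precedes_append)

lemma precedes_swap:
  "distinct p \<Longrightarrow> u \<in> set p \<Longrightarrow> v \<in> set p \<Longrightarrow> u \<noteq> v \<Longrightarrow> precedes p u v \<longleftrightarrow> \<not> precedes p v u"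
  by (meson precedes_asym precedes_total)

lemma list_eq_by_precedes:
  assumes "distinct xs" "distinct ys" "set xs = set ys" "\<And>u v. precedes xs u v \<longleftrightarrow> precedes ys u v"
  shows "xs = ys"
  using assms
proof (induction xs arbitrary: ys)
  case Nil
  then show ?case by simp
next
  case (Cons x xs)
  then obtain y ys' where ys: "ys = y # ys'" by (cases ys) auto
  have "x = y"
  proof (rule ccontr)
    assume "x \<noteq> y"
    then have "x \<in> set ys'" using Cons.prems(3) ys by auto
    then have "precedes ys y x" using ys by (simp add: precedes_Cons)
    then show False
      using Cons.prems(1,4) \<open>x \<noteq> y\<close> by (auto simp: precedes_Cons dest: precedes_in_set)
  qed
  moreover have "xs = ys'"
  proof (rule Cons.IH)
    show "distinct xs" "distinct ys'" using Cons.prems(1,2) ys by auto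
    show set_eq: "set xs = set ys'" using Cons.prems(1-3) ys \<open>x = y\<close> by auto
    show "precedes xs u v \<longleftrightarrow> precedes ys' u v" for u v
      using Cons.prems(1,2) Cons.prems(4)[of u v] ys \<open>x = y\<close> set_eq
      by (auto simp: precedes_Cons dest: precedes_in_set)
  qed
  ultimately show ?case using ys by simp
qed

text \<open>Sorting by the number of predecessors lists a finite set along a strict total order.\<close>

lemma strict_total_order_as_list:
  assumes fin: "finite S"
    and irrefl: "\<And>u. u \<in> S \<Longrightarrow> \<not> R u u"
    and trans: "\<And>u v w. u \<in> S \<Longrightarrow> v \<in> S \<Longrightarrow> w \<in> S \<Longrightarrow> R u v \<Longrightarrow> R v w \<Longrightarrow> R u w"
    and total: "\<And>u v. u \<in> S \<Longrightarrow> v \<in> S \<Longrightarrow> u \<noteq> v \<Longrightarrow> R u v \<or> R v u"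
  obtains z where "distinct z" "set z = S" "\<And>u v. u \<in> S \<Longrightarrow> v \<in> S \<Longrightarrow> precedes z u v \<longleftrightarrow> R u v"
proof -
  define rank where "rank u = card {w \<in> S. R w u}" for u
  have rank_mono: "rank u < rank v" if "u \<in> S" "v \<in> S" "R u v" for u v
    unfolding rank_def
  proof (rule psubset_card_mono)
    show "finite {w \<in> S. R w v}" using fin by auto
    show "{w \<in> S. R w u} \<subset> {w \<in> S. R w v}"
      using that trans[of _ u v] irrefl by blast
  qed
  obtain xs where "set xs = S" "distinct xs" using finite_distinct_list[OF fin] by blast
  define z where "z = sort_key rank xs"
  have dz: "distinct z" and sz: "set z = S" using \<open>set xs = S\<close> \<open>distinct xs\<close> by (auto simp: z_def)
  have sorted: "sorted (map rank z)" by (simp add: z_def)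
  have R_if_precedes: "R u v" if "precedes z u v" for u v
  proof -
    have "\<exists>i j. i < j \<and> j < length z \<and> z ! i = u \<and> z ! j = v"
      using that by (simp add: precedes_def)
    then obtain i j where ij: "i < j" "j < length z" "z ! i = u" "z ! j = v" by blast
    have "rank u \<le> rank v" using sorted_nth_mono[OF sorted, of i j] ij by auto
    moreover have "u \<noteq> v" using ij dz by (auto simp: nth_eq_iff_index_eq)
    moreover have "u \<in> S" "v \<in> S" using ij sz by auto
    ultimately show ?thesis using total[of u v] rank_mono[of v u] by (meson not_le)
  qed
  have "precedes z u v \<longleftrightarrow> R u v" if "u \<in> S" "v \<in> S" for u v
  proof
    assume "R u v"
    then have "u \<noteq> v" "\<not> R v u" using irrefl trans[of u v u] that by blast+
    then show "precedes z u v" using precedes_total[of u z v] sz that R_if_precedes[of v u] by auto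
  qed (rule R_if_precedes)
  then show ?thesis using that dz sz by blast
qed

lemma perms_distinct: "p \<in> perms n \<Longrightarrow> distinct p"
  and perms_set: "p \<in> perms n \<Longrightarrow> set p = {1..n}"
  unfolding perms_def by auto

lemma finite_perms: "finite (perms n)"
proof (rule finite_subset)
  show "perms n \<subseteq> {xs. set xs \<subseteq> {1..n} \<and> length xs = n}"
    unfolding perms_def using distinct_card by fastforce
qed (simp add: finite_lists_length_eq)

lemma rev_perms: "p \<in> perms n \<Longrightarrow> rev p \<in> perms n"
  unfolding perms_def by auto

lemma precedes_perm_swap:
  "p \<in> perms n \<Longrightarrow> u \<in> {1..n} \<Longrightarrow> v \<in> {1..n} \<Longrightarrow> u \<noteq> v \<Longrightarrow> precedes p u v \<longleftrightarrow> \<not> precedes p v u"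
  using precedes_swap[OF perms_distinct, of p n u v] perms_set[of p n] by auto

lemma invs_less: "(a, b) \<in> invs p \<Longrightarrow> a < b"
  unfolding invs_def by simp

lemma invs_perm_subset: "p \<in> perms n \<Longrightarrow> invs p \<subseteq> {(a, b). a < b \<and> a \<in> {1..n} \<and> b \<in> {1..n}}"
  unfolding invs_eq_precedes using precedes_in_set perms_set by fastforce

lemma invs_perm_range:
  assumes "p \<in> perms n" "(a, b) \<in> invs p"
  shows "1 \<le> a" "b \<le> n"
  using assms invs_perm_subset by fastforce+

lemma trans_invs: "distinct p \<Longrightarrow> trans (invs p)"
  unfolding invs_eq_precedes trans_def by (auto intro: precedes_trans)

lemma perm_eq_by_invs:
  assumes "p \<in> perms n" "q \<in> perms n" "invs p = invs q"
  shows "p = q"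
proof (rule list_eq_by_precedes)
  show dp: "distinct p" "distinct q" using assms perms_distinct by auto
  show sp: "set p = set q" using assms perms_set by auto
  have inv: "precedes p b a \<longleftrightarrow> precedes q b a" if "a < b" for a b
    using assms(3) that unfolding invs_eq_precedes by (auto simp: set_eq_iff)
  show "precedes p u v \<longleftrightarrow> precedes q u v" for u v
  proof (cases "u \<in> set p \<and> v \<in> set p \<and> u \<noteq> v")
    case True
    then show ?thesis
      using inv[of u v] inv[of v u] precedes_swap[OF dp(1), of u v] precedes_swap[OF dp(2), of u v] sp
      by (cases "u < v") auto
  next
    case False
    then show ?thesis using precedes_in_set precedes_irrefl dp sp by metis
  qed
qed

lemma weak_le_antisym: "p \<in> perms n \<Longrightarrow> q \<in> perms n \<Longrightarrow> weak_le p q \<Longrightarrow> weak_le q p \<Longrightarrow> p = q"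
  unfolding weak_le_def using perm_eq_by_invs by blast

lemma invs_rev:
  assumes "p \<in> perms n"
  shows "invs (rev p) = {(a, b). a < b \<and> a \<in> {1..n} \<and> b \<in> {1..n}} - invs p"
proof -
  have "precedes p a b \<longleftrightarrow> \<not> precedes p b a" if "a < b" "a \<in> {1..n}" "b \<in> {1..n}" for a b
    using precedes_perm_swap[OF assms, of a b] that by auto
  moreover have "precedes p a b \<Longrightarrow> a \<in> {1..n} \<and> b \<in> {1..n}" for a b
    using precedes_in_set[of p a b] perms_set[OF assms] by auto
  ultimately show ?thesis unfolding invs_eq_precedes precedes_rev by auto
qed

lemma weak_le_rev:
  assumes "p \<in> perms n" "q \<in> perms n"
  shows "weak_le (rev p) (rev q) \<longleftrightarrow> weak_le q p"
  using invs_perm_subset[OF assms(1)] invs_perm_subset[OF assms(2)]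
  unfolding weak_le_def invs_rev[OF assms(1)] invs_rev[OF assms(2)] by blast

section \<open>Joins and meets in the weak order\<close>

lemma trancl_increasing:
  fixes A :: "('a::order \<times> 'a) set"
  assumes "\<And>s t. (s, t) \<in> A \<Longrightarrow> s < t" "(u, v) \<in> A\<^sup>+"
  shows "u < v"
  using assms(2) by (induction rule: trancl_induct) (auto dest: assms(1))

lemma trancl_within_interval:
  fixes A :: "('a::order \<times> 'a) set"
  assumes incr: "\<And>s t. (s, t) \<in> A \<Longrightarrow> s < t" and "(u, v) \<in> A\<^sup>+"
    and local: "\<And>s t. u \<le> s \<Longrightarrow> t \<le> v \<Longrightarrow> (s, t) \<in> A \<Longrightarrow> (s, t) \<in> B"
  shows "(u, v) \<in> B\<^sup>+"
proof -
  have "w \<le> v \<Longrightarrow> (u, w) \<in> B\<^sup>+" if "(u, w) \<in> A\<^sup>+" for w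
    using that
  proof (induction rule: trancl_induct)
    case (base w)
    then show ?case using local by blast
  next
    case (step w w')
    have "w < w'" "u < w" using incr step.hyps trancl_increasing[OF incr] by auto
    then have "w \<le> v" "u \<le> w" using step.prems by auto
    then show ?case using step local[of w w'] by (auto intro: trancl_into_trancl)
  qed
  then show ?thesis using assms(2) by blast
qed

lemma invs_split:
  assumes "p \<in> perms n" "a < b" "b < c" "(a, c) \<in> invs p" "b \<in> {1..n}"
  shows "(a, b) \<in> invs p \<or> (b, c) \<in> invs p"
proof -
  have "precedes p c a" using assms(4) unfolding invs_eq_precedes by auto
  then have "c \<in> {1..n}" using precedes_in_set[of p c a] perms_set[OF assms(1)] by auto
  moreover have "precedes p b c \<or> precedes p c b"
    using precedes_perm_swap[OF assms(1), of b c] assms(3,5) \<open>c \<in> {1..n}\<close> by auto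
  ultimately show ?thesis
    using \<open>precedes p c a\<close> precedes_trans[OF perms_distinct[OF assms(1)], of b c a] assms(2,3)
    unfolding invs_eq_precedes by auto
qed

lemma trancl_invs_split:
  assumes x: "x \<in> perms n" and y: "y \<in> perms n" and "(a, c) \<in> (invs x \<union> invs y)\<^sup>+"
  shows "a < b \<Longrightarrow> b < c \<Longrightarrow> b \<in> {1..n} \<Longrightarrow>
    (a, b) \<in> (invs x \<union> invs y)\<^sup>+ \<or> (b, c) \<in> (invs x \<union> invs y)\<^sup>+"
  using assms(3)
proof (induction arbitrary: b rule: trancl_induct)
  case (base c)
  then show ?case using invs_split[OF x] invs_split[OF y] by blast
next
  case (step w c)
  have "a < w" "w < c"
    using step.hyps trancl_increasing[of "invs x \<union> invs y"] invs_less by blast+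
  consider "b = w" | "b < w" | "w < b" by fastforce
  then show ?case
  proof cases
    case 1
    then show ?thesis using step.hyps by auto
  next
    case 2
    then show ?thesis using step by (meson trancl_into_trancl)
  next
    case 3
    then have "(w, b) \<in> invs x \<union> invs y \<or> (b, c) \<in> invs x \<union> invs y"
      using invs_split[OF x] invs_split[OF y] step by blast
    then show ?thesis using step.hyps(1) by (auto intro: trancl_into_trancl)
  qed
qed

text \<open>The hypothesis \<open>split\<close> says that the complement of \<open>T\<close> among increasing pairs is transitive
  too; then \<open>T\<close> is the inversion set of the linear order proved transitive here.\<close>

lemma transitive_coclosed_order_trans:
  fixes T :: "('a::linorder \<times> 'a) set"
  assumes "trans T"
    and split: "\<And>a b c. (a, c) \<in> T \<Longrightarrow> a < b \<Longrightarrow> b < c \<Longrightarrow> b \<in> S \<Longrightarrow> (a, b) \<in> T \<or> (b, c) \<in> T"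
    and "u \<in> S" "v \<in> S" "w \<in> S"
    and uv: "(v < u \<and> (v, u) \<in> T) \<or> (u < v \<and> (u, v) \<notin> T)"
    and vw: "(w < v \<and> (w, v) \<in> T) \<or> (v < w \<and> (v, w) \<notin> T)"
  shows "(w < u \<and> (w, u) \<in> T) \<or> (u < w \<and> (u, w) \<notin> T)"
proof -
  have tr: "(a, b) \<in> T \<Longrightarrow> (b, c) \<in> T \<Longrightarrow> (a, c) \<in> T" for a b c
    using assms(1) by (rule transD)
  consider "u < v" "v < w" | "w < v" "v < u" | "v < u" "u < w" | "v < w" "w < u"
    | "u < w" "w < v" | "w < u" "u < v" | "u = w"
    using uv vw by fastforce
  then show ?thesis
  proof cases
    case 1 then show ?thesis using uv vw split[where a = u and b = v and c = w] \<open>v \<in> S\<close> by auto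
  next
    case 2 then show ?thesis using uv vw tr[of w v u] by auto
  next
    case 3 then show ?thesis using uv vw tr[of v u w] by auto
  next
    case 4 then show ?thesis using uv vw split[where a = v and b = w and c = u] \<open>w \<in> S\<close> by auto
  next
    case 5 then show ?thesis using uv vw tr[of u w v] by auto
  next
    case 6 then show ?thesis using uv vw split[where a = w and b = u and c = v] \<open>u \<in> S\<close> by auto
  next
    case 7 then show ?thesis using uv vw by auto
  qed
qed

lemma wjoin_eqI:
  assumes "z \<in> perms n" "weak_le x z" "weak_le y z"
    and "\<And>w. w \<in> perms n \<Longrightarrow> weak_le x w \<Longrightarrow> weak_le y w \<Longrightarrow> weak_le z w"
  shows "wjoin n x y = z"
  unfolding wjoin_def using assms weak_le_antisym by (intro the_equality) blast+

lemma perm_with_invs_trancl: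
  assumes x: "x \<in> perms n" and y: "y \<in> perms n"
  obtains z where "z \<in> perms n" "invs z = (invs x \<union> invs y)\<^sup>+"
proof -
  let ?T = "(invs x \<union> invs y)\<^sup>+"
  let ?R = "\<lambda>u v. (v < u \<and> (v, u) \<in> ?T) \<or> (u < v \<and> (u, v) \<notin> ?T)"
  have T_less: "a < b" if "(a, b) \<in> ?T" for a b
    using trancl_increasing[OF _ that] invs_less by blast
  have T_range: "?T \<subseteq> {1..n} \<times> {1..n}"
    using invs_perm_subset[OF x] invs_perm_subset[OF y] by (intro trancl_subset_Sigma) auto
  obtain z where z: "distinct z" "set z = {1..n}"
    and prec: "\<And>u v. u \<in> {1..n} \<Longrightarrow> v \<in> {1..n} \<Longrightarrow> precedes z u v \<longleftrightarrow> ?R u v"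
  proof (rule strict_total_order_as_list[of "{1..n}" ?R])
    show "?R u v \<or> ?R v u" if "u \<noteq> v" for u v
      using that by (cases "u < v") auto
    show "?R u w" if "u \<in> {1..n}" "v \<in> {1..n}" "w \<in> {1..n}" "?R u v" "?R v w" for u v w
      using transitive_coclosed_order_trans[OF trans_trancl trancl_invs_split[OF x y] that] .
  qed (use that in auto)
  have "invs z = ?T"
  proof (intro set_eqI iffI; clarify)
    fix a b assume "(a, b) \<in> invs z"
    then have "a < b" "precedes z b a" unfolding invs_eq_precedes by auto
    then show "(a, b) \<in> ?T" using prec[of b a] precedes_in_set[of z b a] z(2) by auto
  next
    fix a b assume "(a, b) \<in> ?T"
    moreover have "a \<in> {1..n}" "b \<in> {1..n}" using \<open>(a, b) \<in> ?T\<close> T_range by auto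
    ultimately show "(a, b) \<in> invs z" using prec[of b a] T_less[of a b] unfolding invs_eq_precedes by simp
  qed
  moreover have "z \<in> perms n" using z unfolding perms_def by blast
  ultimately show ?thesis using that by blast
qed

theorem invs_wjoin:
  assumes x: "x \<in> perms n" and y: "y \<in> perms n"
  shows "wjoin n x y \<in> perms n" "invs (wjoin n x y) = (invs x \<union> invs y)\<^sup>+"
proof -
  obtain z where zp: "z \<in> perms n" and invs_z: "invs z = (invs x \<union> invs y)\<^sup>+"
    using perm_with_invs_trancl[OF x y] .
  have "wjoin n x y = z"
  proof (rule wjoin_eqI[OF zp])
    show "weak_le x z" "weak_le y z" unfolding weak_le_def invs_z by auto
    show "weak_le z w" if "w \<in> perms n" "weak_le x w" "weak_le y w" for w
    proof -
      have "invs z \<subseteq> (invs w)\<^sup>+"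
        using that(2,3) unfolding weak_le_def invs_z by (intro trancl_mono_subset) auto
      then show ?thesis unfolding weak_le_def trancl_id[OF trans_invs[OF perms_distinct[OF that(1)]]] .
    qed
  qed
  then show "wjoin n x y \<in> perms n" "invs (wjoin n x y) = (invs x \<union> invs y)\<^sup>+"
    using zp invs_z by auto
qed

lemma weak_le_wjoin_iff:
  assumes "x \<in> perms n" "y \<in> perms n" "w \<in> perms n"
  shows "weak_le (wjoin n x y) w \<longleftrightarrow> weak_le x w \<and> weak_le y w"
proof -
  have "(invs x \<union> invs y)\<^sup>+ \<subseteq> invs w \<longleftrightarrow> invs x \<union> invs y \<subseteq> invs w"
    using trancl_id[OF trans_invs[OF perms_distinct[OF assms(3)]]]
    by (metis le_sup_iff r_into_trancl' subrelI subset_trans trancl_mono_subset)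
  then show ?thesis unfolding weak_le_def invs_wjoin[OF assms(1,2)] by blast
qed

lemma wmeet_eq_rev_wjoin:
  assumes x: "x \<in> perms n" and y: "y \<in> perms n"
  shows "wmeet n x y = rev (wjoin n (rev x) (rev y))"
proof -
  let ?j = "wjoin n (rev x) (rev y)"
  have jp: "?j \<in> perms n" using invs_wjoin rev_perms x y by blast
  have below: "weak_le w (rev ?j) \<longleftrightarrow> weak_le w x \<and> weak_le w y" if "w \<in> perms n" for w
  proof -
    have "weak_le w (rev ?j) \<longleftrightarrow> weak_le ?j (rev w)"
      using weak_le_rev[OF rev_perms[OF that] jp] by simp
    also have "\<dots> \<longleftrightarrow> weak_le (rev x) (rev w) \<and> weak_le (rev y) (rev w)"
      using weak_le_wjoin_iff rev_perms x y that by blast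
    also have "\<dots> \<longleftrightarrow> weak_le w x \<and> weak_le w y" using weak_le_rev x y that by blast
    finally show ?thesis .
  qed
  show ?thesis
    unfolding wmeet_def
  proof (rule the_equality)
    show "rev ?j \<in> perms n \<and> weak_le (rev ?j) x \<and> weak_le (rev ?j) y \<and>
        (\<forall>w\<in>perms n. weak_le w x \<and> weak_le w y \<longrightarrow> weak_le w (rev ?j))"
      using below[of "rev ?j"] below rev_perms[OF jp] by (simp add: weak_le_def)
    show "z = rev ?j" if "z \<in> perms n \<and> weak_le z x \<and> weak_le z y \<and>
        (\<forall>w\<in>perms n. weak_le w x \<and> weak_le w y \<longrightarrow> weak_le w z)" for z
    proof -
      have "weak_le z (rev ?j)" using that below[of z] by blast
      moreover have "weak_le (rev ?j) z"
        using that below[of "rev ?j"] rev_perms[OF jp] by (simp add: weak_le_def)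
      ultimately show ?thesis using weak_le_antisym that rev_perms[OF jp] by blast
    qed
  qed
qed

section \<open>Congruences contracting all long fences\<close>

definition unseparated :: "nat list \<Rightarrow> nat \<Rightarrow> nat \<Rightarrow> bool" where
  "unseparated p a b \<longleftrightarrow> (\<forall>c. a < c \<and> c < b \<longrightarrow> (precedes p c a \<longleftrightarrow> precedes p c b))"

definition left_between :: "nat list \<Rightarrow> nat \<Rightarrow> nat \<Rightarrow> nat set" where
  "left_between p a b = {c. a < c \<and> c < b \<and> precedes p c a}"

definition short_invs :: "nat \<Rightarrow> nat list \<Rightarrow> (nat \<times> nat) set" where
  "short_invs d p = {(a, b) \<in> invs p. b - a < d}"

text \<open>The congruence contracting the fences \<open>f(a, b, L)\<close> with \<open>b - a > d\<close> and those of length \<open>d\<close>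
  in \<open>P\<close>. A cover edge of \<open>f(a, b, L)\<close> changes exactly the inversion \<open>(a, b)\<close>, and its endpoints
  are unseparated at \<open>(a, b)\<close>, with \<open>L\<close> as the values between \<open>a\<close> and \<open>b\<close> lying to their left.\<close>

definition fence_cong :: "nat \<Rightarrow> nat \<Rightarrow> (nat \<times> nat \<times> nat set) set \<Rightarrow> (nat list \<times> nat list) set" where
  "fence_cong n d P = {(x, y). x \<in> perms n \<and> y \<in> perms n \<and> short_invs d x = short_invs d y \<and>
     (\<forall>a b. b - a = d \<longrightarrow> ((a, b) \<in> invs x \<longleftrightarrow> (a, b) \<in> invs y) \<or>
        (unseparated x a b \<and> (a, b, left_between x a b) \<in> P))}"

lemma short_invs_eq_iff:
  "short_invs d x = short_invs d y \<longleftrightarrow> (\<forall>a b. b - a < d \<longrightarrow> ((a, b) \<in> invs x \<longleftrightarrow> (a, b) \<in> invs y))"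
  unfolding short_invs_def by blast

lemma fence_cong_anti_mono: "d' < d \<Longrightarrow> fence_cong n d P \<subseteq> fence_cong n d' Q"
  unfolding fence_cong_def short_invs_eq_iff by auto

lemma fence_cong_mono: "P \<subseteq> Q \<Longrightarrow> fence_cong n d P \<subseteq> fence_cong n d Q"
  unfolding fence_cong_def by blast

lemma short_invs_eq_unseparated:
  assumes x: "x \<in> perms n" and y: "y \<in> perms n" and short: "short_invs d x = short_invs d y"
    and "1 \<le> a" "b \<le> n" "b - a \<le> d"
  shows "unseparated x a b \<longleftrightarrow> unseparated y a b" "left_between x a b = left_between y a b"
proof -
  have same: "(precedes x c a \<longleftrightarrow> precedes y c a) \<and> (precedes x c b \<longleftrightarrow> precedes y c b)"
    if "a < c" "c < b" for c
  proof -
    have "(a, c) \<in> invs x \<longleftrightarrow> (a, c) \<in> invs y" "(c, b) \<in> invs x \<longleftrightarrow> (c, b) \<in> invs y"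
      using short assms(6) that unfolding short_invs_eq_iff by auto
    then show ?thesis
      using precedes_perm_swap[OF x, of c b] precedes_perm_swap[OF y, of c b] that assms(4,5)
      unfolding invs_eq_precedes by auto
  qed
  show "unseparated x a b \<longleftrightarrow> unseparated y a b" "left_between x a b = left_between y a b"
    unfolding unseparated_def left_between_def using same by blast+
qed

lemma fence_cong_differ:
  assumes xy: "(x, y) \<in> fence_cong n d P" and "b - a = d"
    and differ: "\<not> ((a, b) \<in> invs x \<longleftrightarrow> (a, b) \<in> invs y)"
  shows "unseparated x a b" "(a, b, left_between x a b) \<in> P"
    and "unseparated y a b" "left_between y a b = left_between x a b"
    and "1 \<le> a" "b \<le> n"
proof -
  have x: "x \<in> perms n" and y: "y \<in> perms n" and short: "short_invs d x = short_invs d y"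
    using xy unfolding fence_cong_def by auto
  show "unseparated x a b" "(a, b, left_between x a b) \<in> P"
    using xy assms(2) differ unfolding fence_cong_def by auto
  show "1 \<le> a" "b \<le> n" using differ invs_perm_range[OF x] invs_perm_range[OF y] by blast+
  then show "unseparated y a b" "left_between y a b = left_between x a b"
    using short_invs_eq_unseparated[OF x y short] assms(2) \<open>unseparated x a b\<close> by auto
qed

lemma fence_cong_equiv: "equiv (perms n) (fence_cong n d P)"
proof (rule equivI)
  show "refl_on (perms n) (fence_cong n d P)"
    unfolding refl_on_def fence_cong_def by auto
  show "sym (fence_cong n d P)"
  proof (rule symI)
    fix x y assume xy: "(x, y) \<in> fence_cong n d P"
    have "unseparated y a b \<and> (a, b, left_between y a b) \<in> P"
      if "b - a = d" "\<not> ((a, b) \<in> invs y \<longleftrightarrow> (a, b) \<in> invs x)" for a b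
      using fence_cong_differ[OF xy that(1)] that(2) by auto
    then show "(y, x) \<in> fence_cong n d P" using xy unfolding fence_cong_def by auto
  qed
  show "trans (fence_cong n d P)"
  proof (rule transI)
    fix x y z assume xy: "(x, y) \<in> fence_cong n d P" and yz: "(y, z) \<in> fence_cong n d P"
    have x: "x \<in> perms n" and y: "y \<in> perms n" and short: "short_invs d x = short_invs d y"
      using xy unfolding fence_cong_def by auto
    have "unseparated x a b \<and> (a, b, left_between x a b) \<in> P"
      if "b - a = d" "\<not> ((a, b) \<in> invs x \<longleftrightarrow> (a, b) \<in> invs z)" for a b
    proof (cases "(a, b) \<in> invs x \<longleftrightarrow> (a, b) \<in> invs y")
      case True
      then have "\<not> ((a, b) \<in> invs y \<longleftrightarrow> (a, b) \<in> invs z)" using that(2) by simp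
      note yz_sep = fence_cong_differ[OF yz that(1) this]
      then show ?thesis using short_invs_eq_unseparated[OF x y short, of a b] that(1) by simp
    next
      case False
      then show ?thesis using fence_cong_differ[OF xy that(1)] by auto
    qed
    then show "(x, z) \<in> fence_cong n d P" using xy yz unfolding fence_cong_def by auto
  qed
qed (auto simp: fence_cong_def)

lemma wjoin_invs_local:
  assumes x: "x \<in> perms n" and y: "y \<in> perms n" and z: "z \<in> perms n"
    and local: "\<And>s t. a \<le> s \<Longrightarrow> t \<le> b \<Longrightarrow> (s, t) \<in> invs x \<longleftrightarrow> (s, t) \<in> invs y"
  shows "(a, b) \<in> invs (wjoin n x z) \<longleftrightarrow> (a, b) \<in> invs (wjoin n y z)"
proof -
  have transfer: "(a, b) \<in> (invs q \<union> invs z)\<^sup>+"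
    if "(a, b) \<in> (invs p \<union> invs z)\<^sup>+"
      and "\<And>s t. a \<le> s \<Longrightarrow> t \<le> b \<Longrightarrow> (s, t) \<in> invs p \<Longrightarrow> (s, t) \<in> invs q" for p q
    using trancl_within_interval[OF _ that(1), of "invs q \<union> invs z"] invs_less that(2) by blast
  show ?thesis
    unfolding invs_wjoin[OF x z] invs_wjoin[OF y z] using transfer local by blast
qed

lemma unseparated_weak_le:
  assumes x: "x \<in> perms n" and q: "q \<in> perms n" and "weak_le x q" and "(a, b) \<notin> invs q"
    and "unseparated x a b" and ab: "1 \<le> a" "a < b" "b \<le> n"
  shows "unseparated q a b" "left_between q a b = left_between x a b"
proof -
  have sub: "(s, t) \<in> invs x \<Longrightarrow> (s, t) \<in> invs q" for s t
    using \<open>weak_le x q\<close> unfolding weak_le_def by blast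
  have qab: "precedes q a b"
    using \<open>(a, b) \<notin> invs q\<close> precedes_perm_swap[OF q, of a b] ab unfolding invs_eq_precedes by auto
  have key: "(precedes q c a \<longleftrightarrow> precedes x c a) \<and> (precedes q c a \<longleftrightarrow> precedes q c b)"
    if c: "a < c" "c < b" for c
  proof (cases "precedes x c a")
    case True
    then have "precedes q c a" using sub[of a c] c unfolding invs_eq_precedes by auto
    then show ?thesis using True qab precedes_trans[OF perms_distinct[OF q]] by blast
  next
    case False
    then have "\<not> precedes x c b" using \<open>unseparated x a b\<close> c unfolding unseparated_def by blast
    then have "precedes x b c" using precedes_perm_swap[OF x, of b c] c ab by auto
    then have "precedes q b c" using sub[of c b] c unfolding invs_eq_precedes by auto
    then have "\<not> precedes q c b" "\<not> precedes q c a"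
      using precedes_asym[OF perms_distinct[OF q]] precedes_trans[OF perms_distinct[OF q]] qab
      by blast+
    then show ?thesis using False by simp
  qed
  show "unseparated q a b" "left_between q a b = left_between x a b"
    unfolding unseparated_def left_between_def using key by blast+
qed

lemma fence_cong_wjoin:
  assumes xy: "(x, y) \<in> fence_cong n d P" and z: "z \<in> perms n"
  shows "(wjoin n x z, wjoin n y z) \<in> fence_cong n d P"
proof -
  let ?X = "wjoin n x z" and ?Y = "wjoin n y z"
  have x: "x \<in> perms n" and y: "y \<in> perms n" and short: "short_invs d x = short_invs d y"
    using xy unfolding fence_cong_def by auto
  have X: "?X \<in> perms n" and Y: "?Y \<in> perms n" using invs_wjoin x y z by auto
  have local: "(a, b) \<in> invs ?X \<longleftrightarrow> (a, b) \<in> invs ?Y"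
    if "b - a \<le> d" "(a, b) \<in> invs x \<longleftrightarrow> (a, b) \<in> invs y" for a b
  proof (rule wjoin_invs_local[OF x y z])
    fix s t assume "a \<le> s" "t \<le> b"
    then have "(s, t) = (a, b) \<or> t - s < d \<or> t \<le> s" using that(1) by auto
    then show "(s, t) \<in> invs x \<longleftrightarrow> (s, t) \<in> invs y"
      using that(2) short invs_less unfolding short_invs_eq_iff by (metis leD)
  qed
  have short_XY: "short_invs d ?X = short_invs d ?Y"
    unfolding short_invs_eq_iff using local short unfolding short_invs_eq_iff by simp
  have "unseparated ?X a b \<and> (a, b, left_between ?X a b) \<in> P"
    if ab: "b - a = d" and differ: "\<not> ((a, b) \<in> invs ?X \<longleftrightarrow> (a, b) \<in> invs ?Y)" for a b
  proof -
    have "\<not> ((a, b) \<in> invs x \<longleftrightarrow> (a, b) \<in> invs y)" using local ab differ by auto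
    note xy_sep = fence_cong_differ[OF xy ab this]
    have range: "1 \<le> a" "a < b" "b \<le> n"
      using differ invs_perm_range[OF X] invs_perm_range[OF Y] invs_less by blast+
    have x_le: "weak_le x ?X" and y_le: "weak_le y ?Y"
      using invs_wjoin x y z unfolding weak_le_def by auto
    show ?thesis
    proof (cases "(a, b) \<in> invs ?X")
      case False
      then show ?thesis using unseparated_weak_le[OF x X x_le _ _ range] xy_sep by auto
    next
      case True
      then have "(a, b) \<notin> invs ?Y" using differ by simp
      then show ?thesis
        using unseparated_weak_le[OF y Y y_le _ _ range] xy_sep
          short_invs_eq_unseparated[OF X Y short_XY, of a b] range ab by auto
    qed
  qed
  then show ?thesis unfolding fence_cong_def using X Y short_XY by auto
qed

text \<open>Reversal is an antiautomorphism of the weak order; it maps the fence \<open>f(a, b, L)\<close> to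
  \<open>f(a, b, ]a, b[ - L)\<close>.\<close>

definition mirror_fences :: "(nat \<times> nat \<times> nat set) set \<Rightarrow> (nat \<times> nat \<times> nat set) set" where
  "mirror_fences P = {(a, b, {a<..<b} - L) | a b L. (a, b, L) \<in> P}"

lemma mirror_fences_mirror_fences:
  assumes "\<And>a b L. (a, b, L) \<in> P \<Longrightarrow> L \<subseteq> {a<..<b}"
  shows "mirror_fences (mirror_fences P) = P"
proof -
  have "mirror_fences (mirror_fences P) = {(a, b, {a<..<b} - ({a<..<b} - L)) | a b L. (a, b, L) \<in> P}"
    unfolding mirror_fences_def by blast
  also have "\<dots> = {(a, b, L) | a b L. (a, b, L) \<in> P}"
    using assms by (metis (no_types, lifting) Diff_Diff_Int inf.absorb_iff2)
  finally show ?thesis by auto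
qed

lemma unseparated_rev:
  assumes x: "x \<in> perms n" and ab: "1 \<le> a" "a < b" "b \<le> n"
  shows "unseparated (rev x) a b \<longleftrightarrow> unseparated x a b"
    and "left_between (rev x) a b = {a<..<b} - left_between x a b"
proof -
  have flip: "(precedes (rev x) c a \<longleftrightarrow> \<not> precedes x c a) \<and> (precedes (rev x) c b \<longleftrightarrow> \<not> precedes x c b)"
    if "a < c" "c < b" for c
    using precedes_perm_swap[OF x, of a c] precedes_perm_swap[OF x, of b c] that ab
    unfolding precedes_rev by auto
  show "unseparated (rev x) a b \<longleftrightarrow> unseparated x a b"
    unfolding unseparated_def using flip by blast
  show "left_between (rev x) a b = {a<..<b} - left_between x a b"
    unfolding left_between_def using flip by auto
qed

lemma fence_cong_rev:
  assumes xy: "(x, y) \<in> fence_cong n d P"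
  shows "(rev x, rev y) \<in> fence_cong n d (mirror_fences P)"
proof -
  have x: "x \<in> perms n" and y: "y \<in> perms n" and short: "short_invs d x = short_invs d y"
    using xy unfolding fence_cong_def by auto
  have rev_iff: "(a, b) \<in> invs (rev x) \<longleftrightarrow> (a, b) \<in> invs (rev y) \<longleftrightarrow>
      \<not> (a < b \<and> a \<in> {1..n} \<and> b \<in> {1..n}) \<or> ((a, b) \<in> invs x \<longleftrightarrow> (a, b) \<in> invs y)" for a b
    unfolding invs_rev[OF x] invs_rev[OF y] by auto
  have "short_invs d (rev x) = short_invs d (rev y)"
    using short rev_iff unfolding short_invs_eq_iff by blast
  moreover have "unseparated (rev x) a b \<and> (a, b, left_between (rev x) a b) \<in> mirror_fences P"
    if ab: "b - a = d" and differ: "\<not> ((a, b) \<in> invs (rev x) \<longleftrightarrow> (a, b) \<in> invs (rev y))" for a b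
  proof -
    have range: "a < b" "1 \<le> a" "b \<le> n" and "\<not> ((a, b) \<in> invs x \<longleftrightarrow> (a, b) \<in> invs y)"
      using rev_iff[of a b] differ by auto
    then show ?thesis
      using fence_cong_differ[OF xy ab] unseparated_rev[OF x range(2,1,3)]
      unfolding mirror_fences_def by blast
  qed
  ultimately show ?thesis unfolding fence_cong_def using x y rev_perms by auto
qed

lemma fence_cong_wmeet:
  assumes P: "\<And>a b L. (a, b, L) \<in> P \<Longrightarrow> L \<subseteq> {a<..<b}"
    and xy: "(x, y) \<in> fence_cong n d P" and z: "z \<in> perms n"
  shows "(wmeet n x z, wmeet n y z) \<in> fence_cong n d P"
proof -
  have x: "x \<in> perms n" and y: "y \<in> perms n" using xy unfolding fence_cong_def by auto
  have "(wjoin n (rev x) (rev z), wjoin n (rev y) (rev z)) \<in> fence_cong n d (mirror_fences P)"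
    using fence_cong_wjoin[OF fence_cong_rev[OF xy] rev_perms[OF z]] .
  then have "(wmeet n x z, wmeet n y z) \<in> fence_cong n d (mirror_fences (mirror_fences P))"
    using fence_cong_rev wmeet_eq_rev_wjoin[OF x z] wmeet_eq_rev_wjoin[OF y z] by fastforce
  then show ?thesis using mirror_fences_mirror_fences[OF P] by simp
qed

theorem lattice_cong_fence_cong:
  assumes "\<And>a b L. (a, b, L) \<in> P \<Longrightarrow> L \<subseteq> {a<..<b}"
  shows "lattice_cong n (fence_cong n d P)"
  unfolding lattice_cong_def
  using fence_cong_equiv fence_cong_wjoin fence_cong_wmeet[OF assms] by blast

definition fence_prefix :: "nat \<Rightarrow> nat \<Rightarrow> nat \<Rightarrow> nat set \<Rightarrow> nat list" where
  "fence_prefix n a b L = filter (\<lambda>c. c \<noteq> a \<and> c \<noteq> b \<and> (a < c \<and> c < b \<longrightarrow> c \<in> L)) [1..<Suc n]"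

definition fence_suffix :: "nat \<Rightarrow> nat \<Rightarrow> nat \<Rightarrow> nat set \<Rightarrow> nat list" where
  "fence_suffix n a b L = filter (\<lambda>c. a < c \<and> c < b \<and> c \<notin> L) [1..<Suc n]"

definition fence_bottom :: "nat \<Rightarrow> nat \<Rightarrow> nat \<Rightarrow> nat set \<Rightarrow> nat list" where
  "fence_bottom n a b L = fence_prefix n a b L @ [a, b] @ fence_suffix n a b L"

definition fence_top :: "nat \<Rightarrow> nat \<Rightarrow> nat \<Rightarrow> nat set \<Rightarrow> nat list" where
  "fence_top n a b L = fence_prefix n a b L @ [b, a] @ fence_suffix n a b L"

context
  fixes n a b :: nat and L :: "nat set"
  assumes ab: "1 \<le> a" "a < b" "b \<le> n" and L: "L \<subseteq> {a<..<b}"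
begin

lemma set_fence_prefix: "set (fence_prefix n a b L) = {c \<in> {1..n}. c \<noteq> a \<and> c \<noteq> b \<and> (a < c \<and> c < b \<longrightarrow> c \<in> L)}"
  and set_fence_suffix: "set (fence_suffix n a b L) = {c \<in> {1..n}. a < c \<and> c < b \<and> c \<notin> L}"
  unfolding fence_prefix_def fence_suffix_def by auto

lemma fence_bottom_perm: "fence_bottom n a b L \<in> perms n"
  and fence_top_perm: "fence_top n a b L \<in> perms n"
proof -
  have "distinct (fence_prefix n a b L)" "distinct (fence_suffix n a b L)"
    unfolding fence_prefix_def fence_suffix_def by simp_all
  then show "fence_bottom n a b L \<in> perms n" "fence_top n a b L \<in> perms n"
    unfolding perms_def fence_bottom_def fence_top_def using ab
    by (auto simp: set_fence_prefix set_fence_suffix)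
qed

lemma fence_bottom_top_in_fence: "(fence_bottom n a b L, fence_top n a b L) \<in> fence n a b L"
proof -
  let ?i = "length (fence_prefix n a b L)" and ?p = "fence_bottom n a b L"
  have "Suc ?i < length ?p" "?p ! ?i = a" "?p ! Suc ?i = b"
    "fence_top n a b L = ?p[?i := b, Suc ?i := a]"
    "\<forall>c\<in>L. c \<in> set (take ?i ?p)" "\<forall>c\<in>{a<..<b} - L. c \<in> set (drop (Suc (Suc ?i)) ?p)"
    unfolding fence_bottom_def fence_top_def using ab L
    by (auto simp: nth_append list_update_append set_fence_prefix set_fence_suffix)
  then show ?thesis unfolding fence_def using fence_bottom_perm fence_top_perm by blast
qed

lemma invs_fence_top: "invs (fence_top n a b L) = insert (a, b) (invs (fence_bottom n a b L))"
  and not_inv_fence_bottom: "(a, b) \<notin> invs (fence_bottom n a b L)"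
proof -
  have "a \<notin> set (fence_prefix n a b L)" "b \<notin> set (fence_prefix n a b L)"
    "a \<notin> set (fence_suffix n a b L)" "b \<notin> set (fence_suffix n a b L)"
    unfolding set_fence_prefix set_fence_suffix by simp_all
  then show "invs (fence_top n a b L) = insert (a, b) (invs (fence_bottom n a b L))"
    "(a, b) \<notin> invs (fence_bottom n a b L)"
    unfolding invs_eq_precedes fence_bottom_def fence_top_def using ab
    by (auto simp: precedes_append precedes_Cons dest: precedes_in_set)
qed

lemma unseparated_fence_bottom: "unseparated (fence_bottom n a b L) a b"
  and left_between_fence_bottom: "left_between (fence_bottom n a b L) a b = L"
proof -
  have "precedes (fence_bottom n a b L) c a \<longleftrightarrow> c \<in> L" "precedes (fence_bottom n a b L) c b \<longleftrightarrow> c \<in> L"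
    if "a < c" "c < b" for c
    unfolding fence_bottom_def using ab that
    by (auto simp: precedes_append precedes_Cons set_fence_prefix set_fence_suffix dest: precedes_in_set)
  then show "unseparated (fence_bottom n a b L) a b" "left_between (fence_bottom n a b L) a b = L"
    unfolding unseparated_def left_between_def using L by auto
qed

lemma fence_edge_notin_fence_cong: "b - a < d \<Longrightarrow> (fence_bottom n a b L, fence_top n a b L) \<notin> fence_cong n d P"
  unfolding fence_cong_def short_invs_eq_iff using not_inv_fence_bottom by (auto simp: invs_fence_top)

lemma fence_edge_in_fence_cong_iff:
  assumes "b - a = d"
  shows "(fence_bottom n a b L, fence_top n a b L) \<in> fence_cong n d P \<longleftrightarrow> (a, b, L) \<in> P"
proof
  assume "(fence_bottom n a b L, fence_top n a b L) \<in> fence_cong n d P"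
  then have "((a, b) \<in> invs (fence_bottom n a b L) \<longleftrightarrow> (a, b) \<in> invs (fence_top n a b L)) \<or>
      (a, b, left_between (fence_bottom n a b L) a b) \<in> P"
    using assms unfolding fence_cong_def by blast
  then show "(a, b, L) \<in> P"
    using not_inv_fence_bottom left_between_fence_bottom by (simp add: invs_fence_top)
next
  assume "(a, b, L) \<in> P"
  then show "(fence_bottom n a b L, fence_top n a b L) \<in> fence_cong n d P"
    unfolding fence_cong_def short_invs_eq_iff
    using assms not_inv_fence_bottom fence_bottom_perm fence_top_perm
      unseparated_fence_bottom left_between_fence_bottom
    by (auto simp: invs_fence_top)
qed

end

lemma fence_cong_essential:
  assumes "2 \<le> d" "\<And>a b L. (a, b, L) \<in> P \<Longrightarrow> L \<subseteq> {a<..<b}"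
  shows "fence_cong n d P \<in> ess_congs n"
proof -
  have "\<not> fence n a (a + 1) {} \<subseteq> fence_cong n d P" if "1 \<le> a" "a + 1 \<le> n" for a
    using fence_bottom_top_in_fence[of a "a + 1" n "{}"] fence_edge_notin_fence_cong[of a "a + 1" n "{}" d P]
      that assms(1) by auto
  then show ?thesis
    unfolding ess_congs_def fences_of_def valid_fence_def
    using lattice_cong_fence_cong[OF assms(2)] by auto
qed

section \<open>A long chain of essential congruences\<close>

definition fences_of_length :: "nat \<Rightarrow> nat \<Rightarrow> (nat \<times> nat \<times> nat set) set" where
  "fences_of_length n d = {(a, b, L). valid_fence n (a, b, L) \<and> b - a = d}"

lemma card_fences_of_length:
  assumes "1 \<le> d"
  shows "card (fences_of_length n d) = (n - d) * 2 ^ (d - 1)"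
proof -
  let ?A = "SIGMA a:{1..n - d}. Pow {a<..<a + d}"
  have eq: "fences_of_length n d = (\<lambda>(a, L). (a, a + d, L)) ` ?A"
  proof (rule set_eqI)
    fix f
    show "f \<in> fences_of_length n d \<longleftrightarrow> f \<in> (\<lambda>(a, L). (a, a + d, L)) ` ?A"
    proof
      assume "f \<in> fences_of_length n d"
      then obtain a b L where "f = (a, b, L)" "1 \<le> a" "a < b" "b \<le> n" "L \<subseteq> {a<..<b}" "b - a = d"
        unfolding fences_of_length_def valid_fence_def by auto
      then show "f \<in> (\<lambda>(a, L). (a, a + d, L)) ` ?A" by (auto intro!: image_eqI[of _ _ "(a, L)"])
    qed (use assms in \<open>auto simp: fences_of_length_def valid_fence_def\<close>)
  qed
  have "inj_on (\<lambda>(a, L). (a, a + d, L)) ?A" by (auto simp: inj_on_def)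
  then have "card (fences_of_length n d) = card ?A" unfolding eq by (rule card_image)
  also have "\<dots> = (\<Sum>a\<in>{1..n - d}. card (Pow {a<..<a + d}))" by (rule card_SigmaI) auto
  also have "\<dots> = (n - d) * 2 ^ (d - 1)" by (simp add: card_Pow)
  finally show ?thesis .
qed

lemma sum_pow2_atLeastLessThan: "2 \<le> n \<Longrightarrow> (\<Sum>d = 2..<n. (2::int) ^ (d - 1)) = 2 ^ (n - 1) - 2"
proof (induction n rule: nat_induct_at_least)
  case (Suc n)
  then show ?case by (cases n) auto
qed simp

lemma sum_weighted_pow2_atLeastLessThan:
  "2 \<le> n \<Longrightarrow> (\<Sum>d = 2..<n. int (n - d) * 2 ^ (d - 1)) = 2 ^ n - 2 * int n"
proof (induction n rule: nat_induct_at_least)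
  case (Suc n)
  have shift: "(\<Sum>d = 2..<n. int (Suc n - d) * 2 ^ (d - 1))
      = (\<Sum>d = 2..<n. int (n - d) * 2 ^ (d - 1) + 2 ^ (d - 1))"
    by (rule sum.cong) (auto simp: algebra_simps of_nat_diff Suc_diff_le)
  have "(\<Sum>d = 2..<Suc n. int (Suc n - d) * 2 ^ (d - 1))
      = (\<Sum>d = 2..<n. int (Suc n - d) * 2 ^ (d - 1)) + 2 ^ (n - 1)"
    using Suc.hyps by (simp add: sum.atLeastLessThan_Suc)
  also have "\<dots> = (2 ^ n - 2 * int n) + (2 ^ (n - 1) - 2) + 2 ^ (n - 1)"
    by (simp only: shift sum.distrib Suc.IH sum_pow2_atLeastLessThan[OF Suc.hyps])
  also have "\<dots> = 2 ^ Suc n - 2 * int (Suc n)"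
    using Suc.hyps by (cases n) auto
  finally show ?case .
qed simp

definition fence_enum :: "nat \<Rightarrow> nat \<Rightarrow> (nat \<times> nat \<times> nat set) list" where
  "fence_enum n d = (SOME xs. set xs = fences_of_length n d \<and> distinct xs)"

lemma fence_enum: "set (fence_enum n d) = fences_of_length n d" "distinct (fence_enum n d)"
proof -
  have "finite (fences_of_length n d)"
    by (rule finite_subset[of _ "{1..n} \<times> {1..n} \<times> Pow {1..n}"])
      (auto simp: fences_of_length_def valid_fence_def)
  then have "set (fence_enum n d) = fences_of_length n d \<and> distinct (fence_enum n d)"
    unfolding fence_enum_def by (rule someI_ex[OF finite_distinct_list])
  then show "set (fence_enum n d) = fences_of_length n d" "distinct (fence_enum n d)" by auto
qed

text \<open>The chain contracts, for \<open>d = n - 1, \<dots>, 2\<close>, all fences longer than \<open>d\<close> and then the fences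
  of length \<open>d\<close> one at a time. The index \<open>(n, 0)\<close> gives the identity relation; \<open>(d, 0)\<close> is left
  out, being the same congruence as the last index with first component \<open>d + 1\<close>.\<close>

definition chain_cong :: "nat \<Rightarrow> nat \<times> nat \<Rightarrow> (nat list \<times> nat list) set" where
  "chain_cong n = (\<lambda>(d, k). fence_cong n d (set (take k (fence_enum n d))))"

definition chain_index :: "nat \<Rightarrow> (nat \<times> nat) set" where
  "chain_index n = insert (n, 0) (SIGMA d:{2..<n}. {1..card (fences_of_length n d)})"

lemma card_chain_index:
  assumes "3 \<le> n"
  shows "int (card (chain_index n)) = 2 ^ n - 2 * int n + 1"
proof -
  have "card (chain_index n) = Suc (\<Sum>d = 2..<n. card (fences_of_length n d))"
    unfolding chain_index_def by (simp add: card_SigmaI)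
  also have "(\<Sum>d = 2..<n. card (fences_of_length n d)) = (\<Sum>d = 2..<n. (n - d) * 2 ^ (d - 1))"
    by (rule sum.cong) (auto simp: card_fences_of_length)
  finally show ?thesis using sum_weighted_pow2_atLeastLessThan[of n] assms by simp
qed

lemma take_fence_enum_wf: "(a, b, L) \<in> set (take k (fence_enum n d)) \<Longrightarrow> L \<subseteq> {a<..<b}"
  using set_take_subset[of k "fence_enum n d"] fence_enum(1)
  unfolding fences_of_length_def valid_fence_def by auto

lemma chain_cong_essential: "i \<in> chain_index n \<Longrightarrow> 3 \<le> n \<Longrightarrow> chain_cong n i \<in> ess_congs n"
  unfolding chain_index_def chain_cong_def by (auto intro!: fence_cong_essential take_fence_enum_wf)

lemma chain_cong_strict:
  assumes i: "(d, k) \<in> chain_index n" and j: "(d', k') \<in> chain_index n"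
    and lex: "d' < d \<or> (d = d' \<and> k < k')"
  shows "chain_cong n (d, k) \<subset> chain_cong n (d', k')"
proof -
  let ?xs = "fence_enum n d'"
  have j': "2 \<le> d'" "1 \<le> k'" "k' \<le> length ?xs"
    using j lex i distinct_card[OF fence_enum(2)] fence_enum(1) unfolding chain_index_def by auto
  obtain a b L where f: "?xs ! (k' - 1) = (a, b, L)" by (metis prod_cases3)
  have "take k' ?xs = take (k' - 1) ?xs @ [(a, b, L)]"
    using take_Suc_conv_app_nth[of "k' - 1" ?xs] f j' by simp
  then have new: "(a, b, L) \<in> set (take k' ?xs)" "(a, b, L) \<notin> set (take (k' - 1) ?xs)"
    using distinct_take[OF fence_enum(2), of k' n d'] by auto
  then have "(a, b, L) \<in> fences_of_length n d'" using fence_enum(1) set_take_subset by (metis subsetD)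
  then have ab: "1 \<le> a" "a < b" "b \<le> n" "L \<subseteq> {a<..<b}" "b - a = d'"
    unfolding fences_of_length_def valid_fence_def by auto
  have "(fence_bottom n a b L, fence_top n a b L) \<in> chain_cong n (d', k')"
    unfolding chain_cong_def using fence_edge_in_fence_cong_iff[OF ab] new by simp
  moreover have "(fence_bottom n a b L, fence_top n a b L) \<notin> chain_cong n (d, k)"
    using lex
  proof
    assume "d' < d"
    then show ?thesis unfolding chain_cong_def using fence_edge_notin_fence_cong[OF ab(1-4)] ab(5) by simp
  next
    assume dk: "d = d' \<and> k < k'"
    then have "set (take k ?xs) \<subseteq> set (take (k' - 1) ?xs)"
      using dk by (intro set_take_subset_set_take) linarith
    then have "(a, b, L) \<notin> set (take k ?xs)" using new(2) by blast
    then show ?thesis unfolding chain_cong_def using fence_edge_in_fence_cong_iff[OF ab] dk by simp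
  qed
  moreover have "chain_cong n (d, k) \<subseteq> chain_cong n (d', k')"
    using lex fence_cong_anti_mono fence_cong_mono[OF set_take_subset_set_take, of k k']
    unfolding chain_cong_def by (auto simp: subset_iff)
  ultimately show ?thesis by blast
qed

lemma card_quotient_less:
  assumes "finite A" "equiv A R" "equiv A R'" "R \<subset> R'"
  shows "card (A // R') < card (A // R)"
proof -
  let ?f = "\<lambda>X. R' `` X"
  have img: "?f ` (A // R) = A // R'"
    using refines_equiv_image_eq assms(2-4) by blast
  obtain x y where xy: "(x, y) \<in> R'" "(x, y) \<notin> R" using assms(4) by auto
  then have "x \<in> A" "y \<in> A" using assms(3) unfolding equiv_def refl_on_def by auto
  have "R `` {x} \<noteq> R `` {y}"
    using xy \<open>x \<in> A\<close> \<open>y \<in> A\<close> equiv_class_eq_iff[OF assms(2)] by blast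
  moreover have "?f (R `` {x}) = ?f (R `` {y})"
    using refines_equiv_class_eq2[OF _ assms(2,3)] assms(4) equiv_class_eq[OF assms(3) xy(1)] by auto
  moreover have "R `` {x} \<in> A // R" "R `` {y} \<in> A // R"
    using \<open>x \<in> A\<close> \<open>y \<in> A\<close> by (auto intro: quotientI)
  ultimately have "\<not> inj_on ?f (A // R)" unfolding inj_on_def by blast
  moreover have "finite (A // R)" using finite_quotient assms(1,2) equiv_type by blast
  ultimately show ?thesis
    using img card_image_le[of "A // R" ?f] eq_card_imp_inj_on[of "A // R" ?f] by fastforce
qed

lemma card_quotient_chain_cong_neq:
  assumes "i \<in> chain_index n" "j \<in> chain_index n" "i \<noteq> j"
  shows "card (perms n // chain_cong n i) \<noteq> card (perms n // chain_cong n j)"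
proof -
  have "chain_cong n i \<subset> chain_cong n j \<or> chain_cong n j \<subset> chain_cong n i"
    using chain_cong_strict[of _ _ n] assms by (cases i, cases j) (metis linorder_neqE_nat)
  moreover have "equiv (perms n) (chain_cong n i)" "equiv (perms n) (chain_cong n j)"
    unfolding chain_cong_def using fence_cong_equiv by (auto split: prod.split)
  ultimately show ?thesis using card_quotient_less[OF finite_perms] by (metis less_irrefl)
qed

theorem mainTheorem9:
  fixes n :: nat
  assumes "n \<ge> 3"
  shows "\<exists>S \<subseteq> ess_congs n.
           int (card S) \<ge> 2 ^ n - 2 * int n + 1 \<and>
           (\<forall>R\<in>S. \<forall>R'\<in>S. R \<noteq> R' \<longrightarrow> \<not> graph_iso (QR n R) (QR n R'))"
proof (intro exI conjI)
  let ?S = "chain_cong n ` chain_index n"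
  show "?S \<subseteq> ess_congs n" using chain_cong_essential assms by auto
  have "inj_on (chain_cong n) (chain_index n)"
    using card_quotient_chain_cong_neq unfolding inj_on_def by metis
  then show "int (card ?S) \<ge> 2 ^ n - 2 * int n + 1"
    using card_image card_chain_index[OF assms] by fastforce
  have iso_card: "graph_iso (QR n R) (QR n R') \<Longrightarrow> card (perms n // R) = card (perms n // R')" for R R'
    unfolding graph_iso_def QR_def using bij_betw_same_card by auto
  show "\<forall>R\<in>?S. \<forall>R'\<in>?S. R \<noteq> R' \<longrightarrow> \<not> graph_iso (QR n R) (QR n R')"
    using card_quotient_chain_cong_neq iso_card by blast
qed

end
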